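(* Let $0<\beta<1$ and $p>0$. For $w\in W^{1,1}[-p,p]$ nonnegative with $w(-p)=w(p)=0$, define $$\Lambda[w,p]=\frac{\sqrt{1-\beta^2}}{p}\int_{-p}^{p}\Big[\sqrt{1+w'(x)^2}-\beta+\frac{\sqrt{1-\beta^2}}{p}\,x\,w'(x)\Big]dx.$$ Then $$\Lambda[w,p]\ \ge\ \arccos\beta-\beta\sqrt{1-\beta^2},$$ with equality if and only if $w(x)=\sqrt{R^2-x^2}-\beta R$ with $R=p/\sqrt{1-\beta^2}$.
   Context: $W^{1,1}[-p,p]$ denotes the Sobolev space of integrable functions on $[-p,p]$ with integrable weak derivative (absolutely continuous functions). *)

theory Defs
  imports "HOL-Analysis.Analysis"
begin

text \<open>W^{1,1}[a,b]: w is (a.e. equal to) an absolutely continuous function, i.e.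
  there is an integrable g (the weak derivative w') with
  w x = w a + \<integral>_a^x g for all x in [a,b].\<close>
definition W11_weak_deriv :: "real \<Rightarrow> real \<Rightarrow> (real \<Rightarrow> real) \<Rightarrow> (real \<Rightarrow> real) \<Rightarrow> bool" where
  "W11_weak_deriv a b w g \<longleftrightarrow>
     g absolutely_integrable_on {a..b} \<and>
     (\<forall>x\<in>{a..b}. w x = w a + integral {a..x} g)"

text \<open>The functional Lambda[w,p], expressed through the weak derivative g = w'.\<close>
definition Lambda :: "real \<Rightarrow> (real \<Rightarrow> real) \<Rightarrow> real \<Rightarrow> real" where
  "Lambda \<beta> g p = sqrt (1 - \<beta>\<^sup>2) / p *
     integral {-p..p} (\<lambda>x. sqrt (1 + (g x)\<^sup>2) - \<beta> + sqrt (1 - \<beta>\<^sup>2) / p * x * g x)"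

end

theory Submission
  imports Defs
begin

text \<open>Write \<open>c = sqrt (1 - \<beta>\<^sup>2) / p = 1 / R\<close>. For \<open>\<bar>b\<bar> < 1\<close> the rotation identity
  \<open>1 + t\<^sup>2 = (sqrt (1 - b\<^sup>2) - b t)\<^sup>2 + (b + sqrt (1 - b\<^sup>2) t)\<^sup>2\<close> gives
  \<open>sqrt (1 + t\<^sup>2) + b t \<ge> sqrt (1 - b\<^sup>2)\<close>, with equality exactly when \<open>t = - b / sqrt (1 - b\<^sup>2)\<close>.
  Taking \<open>b = c x\<close> and \<open>t = w' x\<close>, the integrand of \<open>\<Lambda>\<close> dominates \<open>sqrt (1 - (c x)\<^sup>2) - \<beta>\<close>,
  whose integral over \<open>[-p, p]\<close>, multiplied by \<open>c\<close>, is \<open>arccos \<beta> - \<beta> sqrt (1 - \<beta>\<^sup>2)\<close>.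
  Equality therefore holds iff \<open>w'\<close> is almost everywhere the slope of the circle of radius \<open>R\<close>
  centred at \<open>(0, - \<beta> R)\<close>. As \<open>w (-p) = 0\<close>, this is equivalent to \<open>w\<close> being that circle, because
  an integrable function whose indefinite integrals all vanish is zero almost everywhere.\<close>

section \<open>Functions with vanishing integrals\<close>

lemma integral_nonneg_eq_0_iff_negligible:
  fixes f :: "'a::euclidean_space \<Rightarrow> real"
  assumes f: "f absolutely_integrable_on S" and S: "S \<in> sets lebesgue"
    and nonneg: "\<And>x. x \<in> S \<Longrightarrow> 0 \<le> f x"
  shows "integral S f = 0 \<longleftrightarrow> negligible {x\<in>S. f x \<noteq> 0}"
proof
  assume "integral S f = 0"
  then have "integral\<^sup>L lebesgue (\<lambda>x. indicator S x *\<^sub>R f x) = 0"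
    using set_lebesgue_integral_eq_integral(2)[OF f] by (simp add: set_lebesgue_integral_def)
  moreover have "integrable lebesgue (\<lambda>x. indicator S x *\<^sub>R f x)"
    using f unfolding set_integrable_def .
  ultimately have "AE x in lebesgue. indicator S x *\<^sub>R f x = 0"
    using integral_nonneg_eq_0_iff_AE[of lebesgue "\<lambda>x. indicator S x *\<^sub>R f x"] nonneg
    by (auto simp: indicator_def)
  then have "negligible {x. indicator S x *\<^sub>R f x \<noteq> 0}"
    by (simp add: completion.AE_iff_null_sets negligible_iff_null_sets)
  then show "negligible {x\<in>S. f x \<noteq> 0}"
    by (rule negligible_subset) (auto simp: indicator_def)
next
  assume "negligible {x\<in>S. f x \<noteq> 0}"
  then have "integral S f = integral S (\<lambda>x. 0)"
    by (rule integral_spike) auto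
  then show "integral S f = 0" by simp
qed

lemma AE_eq_0_if_integrals_greaterThan_eq_0:
  fixes K :: "real \<Rightarrow> real"
  assumes K: "integrable lborel K"
    and tails: "\<And>t. integral\<^sup>L lborel (\<lambda>x. indicator {t<..} x * K x) = 0"
  shows "AE x in lborel. K x = 0"
proof -
  have tail_density: "emeasure (density lborel (\<lambda>x. ennreal (k x))) {t<..}
      = ennreal (integral\<^sup>L lborel (\<lambda>x. indicator {t<..} x * max (k x) 0))"
    if k: "integrable lborel k" for k :: "real \<Rightarrow> real" and t :: real
  proof -
    have [measurable]: "k \<in> borel_measurable borel" using k by auto
    have "emeasure (density lborel (\<lambda>x. ennreal (k x))) {t<..}
        = (\<integral>\<^sup>+x. ennreal (k x) * indicator {t<..} x \<partial>lborel)"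
      by (simp add: emeasure_density)
    also have "\<dots> = (\<integral>\<^sup>+x. ennreal (indicator {t<..} x * max (k x) 0) \<partial>lborel)"
      by (intro nn_integral_cong) (auto simp: indicator_def max_def ennreal_neg)
    also have "\<dots> = ennreal (integral\<^sup>L lborel (\<lambda>x. indicator {t<..} x * max (k x) 0))"
      by (intro nn_integral_eq_integral Bochner_Integration.integrable_bound[OF k])
        (auto simp: indicator_def)
    finally show ?thesis .
  qed
  have [measurable]: "K \<in> borel_measurable borel" using K by auto
  have tails_eq: "integral\<^sup>L lborel (\<lambda>x. indicator {t<..} x * max (K x) 0)
      = integral\<^sup>L lborel (\<lambda>x. indicator {t<..} x * max (- K x) 0)" for t
  proof -
    have "integrable lborel (\<lambda>x. indicator {t<..} x * max (c * K x) 0)" for c :: real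
      by (rule Bochner_Integration.integrable_bound[of _ "\<lambda>x. \<bar>c\<bar> * K x"])
        (use K in \<open>auto simp: indicator_def abs_mult[symmetric]\<close>)
    from this[of 1] this[of "-1"] have
      "integral\<^sup>L lborel (\<lambda>x. indicator {t<..} x * max (K x) 0)
        - integral\<^sup>L lborel (\<lambda>x. indicator {t<..} x * max (- K x) 0)
       = integral\<^sup>L lborel (\<lambda>x. indicator {t<..} x * max (K x) 0 - indicator {t<..} x * max (- K x) 0)"
      by simp
    also have "\<dots> = integral\<^sup>L lborel (\<lambda>x. indicator {t<..} x * K x)"
      by (intro Bochner_Integration.integral_cong) (auto simp: indicator_def max_def)
    finally show ?thesis using tails[of t] by simp
  qed
  text \<open>The positive and negative parts of \<open>K\<close> are densities of two finite measures
    that agree on all half-lines, hence coincide.\<close>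
  have "density lborel (\<lambda>x. ennreal (K x)) = density lborel (\<lambda>x. ennreal (- K x))"
  proof (rule measure_eqI_lessThan)
    show "emeasure (density lborel (\<lambda>x. ennreal (K x))) {t<..} < \<infinity>" for t
      using tail_density[OF K] by simp
    show "emeasure (density lborel (\<lambda>x. ennreal (K x))) {t<..}
        = emeasure (density lborel (\<lambda>x. ennreal (- K x))) {t<..}" for t
      using tail_density[OF K, of t] tail_density[of "\<lambda>x. - K x" t] K tails_eq[of t] by simp
  qed auto
  then have "AE x in lborel. ennreal (K x) = ennreal (- K x)"
    by (intro sigma_finite_measure.density_unique[OF sigma_finite_lborel]) auto
  then show ?thesis
  proof (rule AE_mp, intro AE_I2 impI)
    fix x assume "ennreal (K x) = ennreal (- K x)"
    then show "K x = 0"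
      by (cases "K x" "0::real" rule: linorder_cases) (auto simp: ennreal_neg)
  qed
qed

lemma integral_greaterThan_Int_eq_0_if_indefinite_integral_eq_0:
  fixes k :: "real \<Rightarrow> real"
  assumes k: "k integrable_on {a..b}"
    and indef: "\<forall>x\<in>{a..b}. integral {a..x} k = 0"
  shows "integral ({t<..} \<inter> {a..b}) k = 0"
proof -
  consider "t < a" | "b \<le> t" | "a \<le> t" "t < b" by linarith
  then show ?thesis
  proof cases
    case 1
    then have "{t<..} \<inter> {a..b} = {a..b}" by auto
    moreover have "integral {a..b} k = 0"
      using indef by (cases "a \<le> b") auto
    ultimately show ?thesis by simp
  next
    case 2
    then have "{t<..} \<inter> {a..b} = {}" by auto
    then show ?thesis by simp
  next
    case 3
    then have "{t<..} \<inter> {a..b} = {t<..b}" by auto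
    moreover have "integral {t<..b} k = integral {t..b} k"
      by (rule integral_spike_set) (auto intro: negligible_subset[of "{t}"])
    moreover have "integral {a..b} k = integral {a..t} k + integral {t..b} k"
      using Henstock_Kurzweil_Integration.integral_combine[OF _ _ k, of t] 3 by simp
    ultimately show ?thesis using indef 3 by simp
  qed
qed

lemma negligible_nonzero_if_indefinite_integral_eq_0:
  fixes k :: "real \<Rightarrow> real"
  assumes k: "k absolutely_integrable_on {a..b}"
    and indef: "\<forall>x\<in>{a..b}. integral {a..x} k = 0"
  shows "negligible {x\<in>{a..b}. k x \<noteq> 0}"
proof -
  text \<open>Uniqueness of measures on the real line needs a Borel function, so replace the zero
    extension of \<open>k\<close> by a Borel representative.\<close>
  define K where "K x = indicator {a..b} x * k x" for x
  have KI: "integrable lebesgue K"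
    using k unfolding set_integrable_def K_def by simp
  then have "K \<in> borel_measurable (completion lborel)" by auto
  then obtain K' where K'm: "K' \<in> borel_measurable lborel" and KK': "AE x in lborel. K x = K' x"
    using completion_ex_borel_measurable_real by blast
  have KK'_lebesgue: "AE x in lebesgue. K x = K' x" using AE_completion[OF KK'] .
  have "integrable lebesgue K'"
    by (rule integrable_cong_AE_imp[OF KI _ KK'_lebesgue]) (auto intro: measurable_completion K'm)
  then have K'I: "integrable lborel K'"
    using integrable_completion[of K' lborel] K'm by auto
  have "integral\<^sup>L lborel (\<lambda>x. indicator {t<..} x * K' x) = 0" for t
  proof -
    have "set_integrable lebesgue ({t<..} \<inter> {a..b}) k"
      by (rule set_integrable_subset[OF k]) auto
    then have kt: "(\<lambda>x. indicator ({t<..} \<inter> {a..b}) x *\<^sub>R k x) \<in> borel_measurable lebesgue"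
      unfolding set_integrable_def by auto
    have K't: "(\<lambda>x. indicator {t<..} x * K' x) \<in> borel_measurable lebesgue"
      using measurable_completion[OF K'm] by (auto intro!: borel_measurable_times borel_measurable_indicator)
    have "integral\<^sup>L lborel (\<lambda>x. indicator {t<..} x * K' x)
        = integral\<^sup>L lebesgue (\<lambda>x. indicator {t<..} x * K' x)"
      using K'm by (subst integral_completion) auto
    also have "\<dots> = integral\<^sup>L lebesgue (\<lambda>x. indicator ({t<..} \<inter> {a..b}) x *\<^sub>R k x)"
      using KK'_lebesgue kt K't by (intro integral_cong_AE) (auto simp: K_def indicator_def)
    also have "\<dots> = integral ({t<..} \<inter> {a..b}) k"
      using set_lebesgue_integral_eq_integral(2)[OF \<open>set_integrable lebesgue ({t<..} \<inter> {a..b}) k\<close>]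
      by (simp add: set_lebesgue_integral_def)
    finally show ?thesis
      using integral_greaterThan_Int_eq_0_if_indefinite_integral_eq_0 k indef
      by (simp add: set_lebesgue_integral_eq_integral(1))
  qed
  then have "AE x in lborel. K' x = 0"
    by (rule AE_eq_0_if_integrals_greaterThan_eq_0[OF K'I])
  then have "AE x in lebesgue. K x = 0"
    using KK' by (intro AE_completion) auto
  then have "negligible {x. K x \<noteq> 0}"
    by (simp add: completion.AE_iff_null_sets negligible_iff_null_sets)
  then show ?thesis
    by (rule negligible_subset) (auto simp: K_def indicator_def)
qed

lemma negligible_neq_iff_indefinite_integrals_eq:
  fixes g h :: "real \<Rightarrow> real"
  assumes g: "g absolutely_integrable_on {a..b}" and h: "h absolutely_integrable_on {a..b}"
  shows "negligible {x\<in>{a..b}. g x \<noteq> h x}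
    \<longleftrightarrow> (\<forall>x\<in>{a..b}. integral {a..x} g = integral {a..x} h)"
proof
  assume N: "negligible {x\<in>{a..b}. g x \<noteq> h x}"
  show "\<forall>x\<in>{a..b}. integral {a..x} g = integral {a..x} h"
    by (intro ballI integral_spike[OF N]) auto
next
  assume eq: "\<forall>x\<in>{a..b}. integral {a..x} g = integral {a..x} h"
  have "\<forall>x\<in>{a..b}. integral {a..x} (\<lambda>y. g y - h y) = 0"
  proof
    fix x assume "x \<in> {a..b}"
    then have "g integrable_on {a..x}" "h integrable_on {a..x}"
      using set_lebesgue_integral_eq_integral(1)[OF g] set_lebesgue_integral_eq_integral(1)[OF h]
      by (auto elim!: integrable_on_subinterval)
    then show "integral {a..x} (\<lambda>y. g y - h y) = 0"
      using eq \<open>x \<in> {a..b}\<close> by (simp add: integral_diff)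
  qed
  then have "negligible {x\<in>{a..b}. g x - h x \<noteq> 0}"
    by (intro negligible_nonzero_if_indefinite_integral_eq_0 set_integral_diff(1) g h)
  then show "negligible {x\<in>{a..b}. g x \<noteq> h x}" by simp
qed

section \<open>A pointwise inequality\<close>

lemma one_plus_sq_eq_rotated:
  fixes b t :: real
  assumes "\<bar>b\<bar> \<le> 1"
  shows "1 + t\<^sup>2 = (sqrt (1 - b\<^sup>2) - b * t)\<^sup>2 + (b + sqrt (1 - b\<^sup>2) * t)\<^sup>2"
proof -
  have "(sqrt (1 - b\<^sup>2))\<^sup>2 = 1 - b\<^sup>2"
    using assms by (simp add: abs_square_le_1)
  then show ?thesis by (simp add: power2_eq_square algebra_simps)
qed

lemma sqrt_one_plus_sq_add_mult_ge:
  fixes b t :: real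
  assumes "\<bar>b\<bar> \<le> 1"
  shows "sqrt (1 - b\<^sup>2) \<le> sqrt (1 + t\<^sup>2) + b * t"
proof -
  have "(sqrt (1 - b\<^sup>2) - b * t)\<^sup>2 \<le> 1 + t\<^sup>2"
    using one_plus_sq_eq_rotated[OF assms, of t] by simp
  then have "\<bar>sqrt (1 - b\<^sup>2) - b * t\<bar> \<le> sqrt (1 + t\<^sup>2)"
    using real_sqrt_le_mono by fastforce
  then show ?thesis by linarith
qed

lemma sqrt_one_plus_sq_add_mult_eq_iff:
  fixes b t :: real
  assumes "\<bar>b\<bar> < 1"
  shows "sqrt (1 + t\<^sup>2) + b * t = sqrt (1 - b\<^sup>2) \<longleftrightarrow> t = - b / sqrt (1 - b\<^sup>2)"
proof -
  define s where "s = sqrt (1 - b\<^sup>2)"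
  have s: "s > 0" using assms by (simp add: s_def abs_square_less_1)
  have rot: "1 + t\<^sup>2 = (s - b * t)\<^sup>2 + (b + s * t)\<^sup>2"
    using one_plus_sq_eq_rotated assms unfolding s_def by simp
  have "sqrt (1 + t\<^sup>2) + b * t = s \<longleftrightarrow> s - b * t \<ge> 0 \<and> 1 + t\<^sup>2 = (s - b * t)\<^sup>2"
    by (auto simp: real_sqrt_unique)
  also have "\<dots> \<longleftrightarrow> b + s * t = 0"
  proof
    assume "b + s * t = 0"
    then have "t = - b / s" using s by (simp add: field_simps)
    then have "b * t = - b\<^sup>2 / s" by (simp add: power2_eq_square)
    then have "b * t \<le> 0" using s by simp
    then show "s - b * t \<ge> 0 \<and> 1 + t\<^sup>2 = (s - b * t)\<^sup>2"
      using rot s \<open>b + s * t = 0\<close> by simp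
  qed (use rot in simp)
  also have "\<dots> \<longleftrightarrow> t = - b / s" using s by (auto simp: field_simps)
  finally show ?thesis unfolding s_def .
qed

section \<open>The circular arc\<close>

definition circle_slope :: "real \<Rightarrow> real \<Rightarrow> real" where
  "circle_slope c x = - (c * x) / sqrt (1 - (c * x)\<^sup>2)"

definition circle_excess :: "real \<Rightarrow> (real \<Rightarrow> real) \<Rightarrow> real \<Rightarrow> real" where
  "circle_excess c g x = sqrt (1 + (g x)\<^sup>2) + c * x * g x - sqrt (1 - (c * x)\<^sup>2)"

lemma circle_excess_nonneg: "\<bar>c * x\<bar> \<le> 1 \<Longrightarrow> 0 \<le> circle_excess c g x"
  using sqrt_one_plus_sq_add_mult_ge[of "c * x" "g x"] by (simp add: circle_excess_def)

lemma circle_excess_eq_0_iff: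
  "\<bar>c * x\<bar> < 1 \<Longrightarrow> circle_excess c g x = 0 \<longleftrightarrow> g x = circle_slope c x"
  using sqrt_one_plus_sq_add_mult_eq_iff[of "c * x" "g x"]
  by (auto simp: circle_excess_def circle_slope_def)

lemma abs_mult_less_1_on_interval:
  fixes c p x :: real
  assumes "0 < c" "c * p < 1" "x \<in> {-p..p}"
  shows "\<bar>c * x\<bar> < 1"
proof -
  have "\<bar>c * x\<bar> \<le> c * p" using assms by (auto simp: abs_mult intro: mult_left_mono)
  then show ?thesis using assms(2) by linarith
qed

lemma has_real_derivative_circle_arc:
  fixes c x :: real
  assumes "c \<noteq> 0" and "(c * x)\<^sup>2 < 1"
  shows "((\<lambda>x. sqrt (1 - (c * x)\<^sup>2) / c) has_real_derivative circle_slope c x) (at x)"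
  using assms by (auto intro!: derivative_eq_intros simp: circle_slope_def field_simps power2_eq_square)

lemma has_real_derivative_circle_area:
  fixes c x :: real
  assumes "c \<noteq> 0" and "(c * x)\<^sup>2 < 1"
  shows "((\<lambda>x. (x * sqrt (1 - (c * x)\<^sup>2) + arcsin (c * x) / c) / 2)
    has_real_derivative sqrt (1 - (c * x)\<^sup>2)) (at x)"
proof -
  have "-1 < c * x" "c * x < 1"
    using assms(2) by (auto simp: abs_square_less_1 abs_less_iff)
  then show ?thesis
    using assms by (auto intro!: derivative_eq_intros simp: field_simps power2_eq_square)
qed

lemma integral_circle_arc:
  fixes c p :: real
  assumes "0 < c" "0 \<le> p" "c * p < 1"
  shows "integral {-p..p} (\<lambda>x. sqrt (1 - (c * x)\<^sup>2)) = p * sqrt (1 - (c * p)\<^sup>2) + arcsin (c * p) / c"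
proof -
  define F where "F x = (x * sqrt (1 - (c * x)\<^sup>2) + arcsin (c * x) / c) / 2" for x
  have "((\<lambda>x. sqrt (1 - (c * x)\<^sup>2)) has_integral F p - F (-p)) {-p..p}"
  proof (rule fundamental_theorem_of_calculus)
    fix x assume "x \<in> {-p..p}"
    then have "(c * x)\<^sup>2 < 1"
      using abs_mult_less_1_on_interval assms by (simp add: abs_square_less_1)
    then show "(F has_vector_derivative sqrt (1 - (c * x)\<^sup>2)) (at x within {-p..p})"
      using has_real_derivative_circle_area[of c x] assms(1) unfolding F_def
      by (simp add: has_real_derivative_iff_has_vector_derivative has_vector_derivative_at_within)
  qed (use assms in simp)
  moreover have "0 \<le> c * p" using assms by simp
  then have "arcsin (- (c * p)) = - arcsin (c * p)"
    using assms by (intro arcsin_minus) linarith+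
  ultimately show ?thesis by (simp add: integral_unique F_def field_simps)
qed

lemma integral_circle_slope:
  fixes c p x :: real
  assumes "0 < c" "c * p < 1" "x \<in> {-p..p}"
  shows "integral {-p..x} (circle_slope c) = (sqrt (1 - (c * x)\<^sup>2) - sqrt (1 - (c * p)\<^sup>2)) / c"
proof -
  have "(circle_slope c has_integral
      sqrt (1 - (c * x)\<^sup>2) / c - sqrt (1 - (c * -p)\<^sup>2) / c) {-p..x}"
  proof (rule fundamental_theorem_of_calculus)
    fix y assume "y \<in> {-p..x}"
    then have "(c * y)\<^sup>2 < 1"
      using abs_mult_less_1_on_interval[of c p y] assms by (simp add: abs_square_less_1)
    then show "((\<lambda>y. sqrt (1 - (c * y)\<^sup>2) / c) has_vector_derivative circle_slope c y)
        (at y within {-p..x})"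
      using has_real_derivative_circle_arc[of c y] assms(1)
      by (simp add: has_real_derivative_iff_has_vector_derivative has_vector_derivative_at_within)
  qed (use assms in simp)
  then show ?thesis by (simp add: integral_unique diff_divide_distrib)
qed

lemma absolutely_integrable_circle_slope:
  fixes c p :: real
  assumes "0 < c" "c * p < 1"
  shows "circle_slope c absolutely_integrable_on {-p..p}"
proof -
  have "\<forall>x\<in>{-p..p}. sqrt (1 - (c * x)\<^sup>2) \<noteq> 0"
  proof
    fix x assume "x \<in> {-p..p}"
    then have "(c * x)\<^sup>2 < 1"
      using abs_mult_less_1_on_interval[OF assms] by (simp add: abs_square_less_1)
    then show "sqrt (1 - (c * x)\<^sup>2) \<noteq> 0" by simp
  qed
  then have "continuous_on {-p..p} (circle_slope c)"
    unfolding circle_slope_def by (intro continuous_intros) auto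
  then show ?thesis by (rule absolutely_integrable_continuous_real)
qed

lemma absolutely_integrable_sqrt_one_plus_sq:
  fixes g :: "real \<Rightarrow> real"
  assumes g: "g absolutely_integrable_on {a..b}"
  shows "(\<lambda>x. sqrt (1 + (g x)\<^sup>2)) absolutely_integrable_on {a..b}"
proof (rule measurable_bounded_by_integrable_imp_absolutely_integrable)
  have "(\<lambda>t. sqrt (1 + t\<^sup>2)) \<in> borel_measurable borel"
    by (intro borel_measurable_continuous_onI continuous_intros)
  then show "(\<lambda>x. sqrt (1 + (g x)\<^sup>2)) \<in> borel_measurable (lebesgue_on {a..b})"
    using measurable_compose g by (fastforce simp: absolutely_integrable_measurable)
  show "(\<lambda>x. 1 + \<bar>g x\<bar>) integrable_on {a..b}"
    using g by (intro integrable_add) (auto simp: absolutely_integrable_on_def)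
  show "norm (sqrt (1 + (g x)\<^sup>2)) \<le> 1 + \<bar>g x\<bar>" for x
  proof -
    have "sqrt (1 + (g x)\<^sup>2) \<le> sqrt ((1 + \<bar>g x\<bar>)\<^sup>2)"
      by (intro real_sqrt_le_mono) (simp add: power2_eq_square algebra_simps)
    then show ?thesis by simp
  qed
qed simp

lemma absolutely_integrable_circle_excess:
  fixes c a b :: real
  assumes "g absolutely_integrable_on {a..b}"
  shows "circle_excess c g absolutely_integrable_on {a..b}"
proof -
  have "(\<lambda>x. c * x * g x) absolutely_integrable_on {a..b}"
  proof (rule absolutely_integrable_bounded_measurable_product_real)
    have "continuous_on {a..b} ((*) c)" by (intro continuous_intros)
    then show "(*) c \<in> borel_measurable (lebesgue_on {a..b})" "bounded ((*) c ` {a..b})"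
      by (auto intro: continuous_imp_measurable_on_sets_lebesgue
          compact_imp_bounded[OF compact_continuous_image[OF _ compact_Icc]])
  qed (use assms in auto)
  moreover have "(\<lambda>x. sqrt (1 - (c * x)\<^sup>2)) absolutely_integrable_on {a..b}"
    by (intro absolutely_integrable_continuous_real continuous_intros)
  ultimately show ?thesis
    unfolding circle_excess_def
    by (intro set_integral_diff set_integral_add absolutely_integrable_sqrt_one_plus_sq assms)
qed

lemma Lambda_eq_circle_bound_add_excess:
  fixes \<beta> p :: real and g :: "real \<Rightarrow> real"
  assumes "0 < \<beta>" "\<beta> < 1" "0 < p" and g: "g absolutely_integrable_on {-p..p}"
  shows "Lambda \<beta> g p = arccos \<beta> - \<beta> * sqrt (1 - \<beta>\<^sup>2)
    + sqrt (1 - \<beta>\<^sup>2) / p * integral {-p..p} (circle_excess (sqrt (1 - \<beta>\<^sup>2) / p) g)"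
proof -
  define s where "s = sqrt (1 - \<beta>\<^sup>2)"
  define c where "c = s / p"
  have "\<beta>\<^sup>2 < 1" using assms by (simp add: power_less_one_iff)
  then have s: "0 < s" "s < 1" "sqrt (1 - s\<^sup>2) = \<beta>"
    using assms by (auto simp: s_def)
  have c: "0 < c" "c * p = s"
    using s \<open>0 < p\<close> by (auto simp: c_def)
  have "arcsin s = arccos \<beta>"
    using arccos_arcsin_sqrt_pos[of \<beta>] assms by (simp add: s_def)
  then have arc: "integral {-p..p} (\<lambda>x. sqrt (1 - (c * x)\<^sup>2)) = p * \<beta> + arccos \<beta> / c"
    using integral_circle_arc[of c p] c s \<open>0 < p\<close> by simp
  have "(\<lambda>x. sqrt (1 - (c * x)\<^sup>2) - \<beta>) integrable_on {-p..p}"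
    by (intro integrable_continuous_interval continuous_intros)
  moreover have "circle_excess c g integrable_on {-p..p}"
    using absolutely_integrable_circle_excess[OF g] by (simp add: set_lebesgue_integral_eq_integral(1))
  ultimately have "integral {-p..p} (\<lambda>x. sqrt (1 + (g x)\<^sup>2) - \<beta> + c * x * g x)
      = integral {-p..p} (circle_excess c g) + integral {-p..p} (\<lambda>x. sqrt (1 - (c * x)\<^sup>2) - \<beta>)"
    by (subst integral_add[symmetric]) (auto simp: circle_excess_def intro!: integral_cong)
  also have "\<dots> = integral {-p..p} (circle_excess c g) + arccos \<beta> / c - p * \<beta>"
    using arc \<open>0 < p\<close>
    by (subst integral_diff) (auto intro!: integrable_continuous_interval continuous_intros)
  finally show ?thesis
    using c unfolding Lambda_def s_def[symmetric] c_def[symmetric] by (simp add: field_simps)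
qed

lemma integral_circle_excess_eq_0_iff:
  fixes c p :: real and w g :: "real \<Rightarrow> real"
  assumes c: "0 < c" "c * p < 1"
    and w: "W11_weak_deriv (-p) p w g" "w (-p) = 0"
  shows "integral {-p..p} (circle_excess c g) = 0
    \<longleftrightarrow> (\<forall>x\<in>{-p..p}. w x = sqrt ((1 / c)\<^sup>2 - x\<^sup>2) - sqrt (1 - (c * p)\<^sup>2) / c)"
proof -
  have g: "g absolutely_integrable_on {-p..p}"
    and w_integral: "\<forall>x\<in>{-p..p}. w x = integral {-p..x} g"
    using w by (auto simp: W11_weak_deriv_def)
  have "{x\<in>{-p..p}. circle_excess c g x \<noteq> 0} = {x\<in>{-p..p}. g x \<noteq> circle_slope c x}"
    using circle_excess_eq_0_iff abs_mult_less_1_on_interval[OF c] by blast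
  then have "integral {-p..p} (circle_excess c g) = 0
      \<longleftrightarrow> negligible {x\<in>{-p..p}. g x \<noteq> circle_slope c x}"
    using integral_nonneg_eq_0_iff_negligible[OF absolutely_integrable_circle_excess[OF g]]
      circle_excess_nonneg abs_mult_less_1_on_interval[OF c] by (simp add: less_imp_le)
  also have "\<dots> \<longleftrightarrow> (\<forall>x\<in>{-p..p}. integral {-p..x} g = integral {-p..x} (circle_slope c))"
    by (rule negligible_neq_iff_indefinite_integrals_eq[OF g absolutely_integrable_circle_slope[OF c]])
  also have "\<dots> \<longleftrightarrow> (\<forall>x\<in>{-p..p}. w x = sqrt ((1 / c)\<^sup>2 - x\<^sup>2) - sqrt (1 - (c * p)\<^sup>2) / c)"
  proof -
    have "sqrt ((1 / c)\<^sup>2 - x\<^sup>2) = sqrt (1 - (c * x)\<^sup>2) / c" for x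
    proof -
      have "(1 / c)\<^sup>2 - x\<^sup>2 = (1 - (c * x)\<^sup>2) / c\<^sup>2" using c(1) by (simp add: field_simps)
      then show ?thesis using c(1) by (simp add: real_sqrt_divide)
    qed
    then show ?thesis
      using w_integral integral_circle_slope[OF c] by (simp add: diff_divide_distrib)
  qed
  finally show ?thesis .
qed

theorem mainTheorem3:
  fixes \<beta> p :: real and w g :: "real \<Rightarrow> real"
  assumes "0 < \<beta>" "\<beta> < 1" "0 < p"
    and "W11_weak_deriv (-p) p w g"
    and "\<forall>x\<in>{-p..p}. w x \<ge> 0"
    and "w (-p) = 0" "w p = 0"
  shows "Lambda \<beta> g p \<ge> arccos \<beta> - \<beta> * sqrt (1 - \<beta>\<^sup>2)
    \<and> (Lambda \<beta> g p = arccos \<beta> - \<beta> * sqrt (1 - \<beta>\<^sup>2) \<longleftrightarrow>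
         (let R = p / sqrt (1 - \<beta>\<^sup>2) in \<forall>x\<in>{-p..p}. w x = sqrt (R\<^sup>2 - x\<^sup>2) - \<beta> * R))"
proof -
  define c where "c = sqrt (1 - \<beta>\<^sup>2) / p"
  have "\<beta>\<^sup>2 < 1" using assms(1,2) by (simp add: power_less_one_iff)
  then have c: "0 < c" "c * p < 1" "sqrt (1 - (c * p)\<^sup>2) = \<beta>" "p / sqrt (1 - \<beta>\<^sup>2) = 1 / c"
    using assms(1-3) by (auto simp: c_def)
  have g: "g absolutely_integrable_on {-p..p}"
    using assms(4) by (simp add: W11_weak_deriv_def)
  have "0 \<le> integral {-p..p} (circle_excess c g)"
    using absolutely_integrable_circle_excess[OF g] circle_excess_nonneg
      abs_mult_less_1_on_interval[OF c(1,2)]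
    by (intro integral_nonneg) (auto simp: set_lebesgue_integral_eq_integral(1) less_imp_le)
  then show ?thesis
    using Lambda_eq_circle_bound_add_excess[OF assms(1-3) g, folded c_def]
      integral_circle_excess_eq_0_iff[OF c(1,2) assms(4,6)] c
    by (simp add: Let_def)
qed

end
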